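(* Let $G$ be an unweighted digraph without loops, let $0<\tau\le1$, and let $M_\tau(t)=I-At+(D-\tau I)\tau t^2+(A-S)\tau^2t^3$. Then $1/\tau$ is always an eigenvalue of $M_\tau(t)$ and its geometric multiplicity equals the number of connected components of the undirected part $G_U$. Moreover, $-1/\tau$ is an eigenvalue of $M_\tau(t)$ if and only if $G_U$ has at least one bipartite connected component, and then its geometric multiplicity equals the number of bipartite connected components of $G_U$.
   Context: $G=(V,E)$ with adjacency matrix $A$, $S=A\circ A^T$, $D=\mathrm{diag}(\mathrm{diag}(A^2))$. The undirected part $G_U$ is the undirected graph on $V$ with edge $\{i,j\}$ iff both $(i,j),(j,i)\in E$; isolated vertices count as (bipartite) connected components. The geometric multiplicity of an eigenvalue $\lambda$ of $M_\tau(t)$ is $\dim\ker M_\tau(\lambda)$. *)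

theory Defs
  imports "HOL-Analysis.Analysis"
begin

definition adj :: "('n::finite \<times> 'n) set \<Rightarrow> real^'n^'n" where
  "adj E = (\<chi> i j. if (i, j) \<in> E then 1 else 0)"

definition hadamard :: "real^'n^'n \<Rightarrow> real^'n^'n \<Rightarrow> real^'n^'n" where
  "hadamard X Y = (\<chi> i j. X $ i $ j * Y $ i $ j)"

definition symm_part :: "('n::finite \<times> 'n) set \<Rightarrow> real^'n^'n" where
  "symm_part E = hadamard (adj E) (transpose (adj E))"

definition deg_diag :: "('n::finite \<times> 'n) set \<Rightarrow> real^'n^'n" where
  "deg_diag E = (\<chi> i j. if i = j then (adj E ** adj E) $ i $ i else 0)"

definition Mtau :: "('n::finite \<times> 'n) set \<Rightarrow> real \<Rightarrow> real \<Rightarrow> real^'n^'n" where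
  "Mtau E \<tau> t = mat 1 - t *\<^sub>R adj E
      + (\<tau> * t^2) *\<^sub>R (deg_diag E - \<tau> *\<^sub>R mat 1)
      + (\<tau>^2 * t^3) *\<^sub>R (adj E - symm_part E)"

definition is_eigenvalue :: "(real \<Rightarrow> real^'n^'n) \<Rightarrow> real \<Rightarrow> bool" where
  "is_eigenvalue M lam \<longleftrightarrow> (\<exists>x. x \<noteq> 0 \<and> M lam *v x = 0)"

definition geom_mult :: "(real \<Rightarrow> real^'n^'n) \<Rightarrow> real \<Rightarrow> nat" where
  "geom_mult M lam = dim {x. M lam *v x = 0}"

definition undir_edges :: "('n \<times> 'n) set \<Rightarrow> ('n \<times> 'n) set" where
  "undir_edges E = {(i, j). (i, j) \<in> E \<and> (j, i) \<in> E}"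

text \<open>Connected components of G_U (isolated vertices are components).\<close>
definition components :: "('n \<times> 'n) set \<Rightarrow> 'n set set" where
  "components E = UNIV // ((undir_edges E)\<^sup>*)"

definition bipartite_comp :: "('n \<times> 'n) set \<Rightarrow> 'n set \<Rightarrow> bool" where
  "bipartite_comp E C \<longleftrightarrow> (\<exists>f :: 'n \<Rightarrow> bool.
      \<forall>i j. i \<in> C \<and> j \<in> C \<and> (i, j) \<in> undir_edges E \<longrightarrow> f i \<noteq> f j)"

end

theory Submission
  imports Defs
begin

(*
  At t = \<sigma>/\<tau> with \<sigma> = \<plusminus>1 the matrix M\<^sub>\<tau>(t) collapses to (D - \<sigma>S)/\<tau>, where S is the adjacency
  matrix of the undirected part G\<^sub>U and D = diag(diag(A\<^sup>2)) is its degree matrix: the Laplacian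
  (\<sigma> = 1) and the signless Laplacian (\<sigma> = -1) of G\<^sub>U. The quadratic form of D - \<sigma>S is
  \<onehalf> \<Sum>\<^sub>i\<^sub>j S\<^sub>i\<^sub>j (x\<^sub>i - \<sigma>x\<^sub>j)\<^sup>2, so its kernel consists of the vectors with x\<^sub>i = \<sigma>x\<^sub>j along every
  edge of G\<^sub>U. Such a vector has constant modulus on each component and is determined there by a
  single value, so the kernel has one dimension for every component that carries a nonzero kernel
  vector. For \<sigma> = 1 every component does (constant vectors); for \<sigma> = -1 exactly the bipartite
  ones do (the sign of the vector is a 2-colouring, and conversely a 2-colouring gives \<plusminus>1 entries).
*)

lemma dim_eq_card_block_basis:
  fixes K :: "(real^'n::finite) set" and w :: "'n set \<Rightarrow> real^'n"
  assumes disjoint: "\<And>C C' i. C \<in> Cs \<Longrightarrow> C' \<in> Cs \<Longrightarrow> i \<in> C \<Longrightarrow> i \<in> C' \<Longrightarrow> C = C'"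
    and pivot: "\<And>C. C \<in> Cs \<Longrightarrow> p C \<in> C" "\<And>C. C \<in> Cs \<Longrightarrow> w C $ p C = 1"
    and support: "\<And>C i. C \<in> Cs \<Longrightarrow> i \<notin> C \<Longrightarrow> w C $ i = 0"
    and w_in: "\<And>C. C \<in> Cs \<Longrightarrow> w C \<in> K"
    and outside: "\<And>x i. x \<in> K \<Longrightarrow> i \<notin> \<Union>Cs \<Longrightarrow> x $ i = 0"
    and inside: "\<And>x C i. x \<in> K \<Longrightarrow> C \<in> Cs \<Longrightarrow> i \<in> C \<Longrightarrow> x $ i = x $ p C * w C $ i"
  shows "dim K = card Cs"
proof -
  have fin: "finite Cs"
    by (rule finite_subset[of _ "Pow UNIV"]) auto
  have w_at_pivot: "w C $ p C' = (if C = C' then 1 else 0)" if "C \<in> Cs" "C' \<in> Cs" for C C'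
    using that disjoint pivot support by metis
  have inj: "inj_on w Cs"
    by (rule inj_onI) (metis w_at_pivot zero_neq_one)
  have "x \<in> span (w ` Cs)" if x: "x \<in> K" for x
  proof -
    have "(\<Sum>C\<in>Cs. x $ p C * w C $ i) = x $ i" for i
    proof -
      have "(\<Sum>C\<in>Cs. x $ p C * w C $ i) = (\<Sum>C\<in>Cs. if i \<in> C then x $ i else 0)"
        using inside[OF x] support by (intro sum.cong) auto
      also have "\<dots> = x $ i"
      proof (cases "i \<in> \<Union>Cs")
        case True
        then obtain C0 where "C0 \<in> Cs" "i \<in> C0" by blast
        then have "(\<Sum>C\<in>Cs. if i \<in> C then x $ i else 0) = (\<Sum>C\<in>Cs. if C = C0 then x $ i else 0)"
          using disjoint by (intro sum.cong) auto
        then show ?thesis using \<open>C0 \<in> Cs\<close> fin by simp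
      next
        case False
        then show ?thesis using outside[OF x] by (auto intro!: sum.neutral)
      qed
      finally show ?thesis .
    qed
    then have "x = (\<Sum>C\<in>Cs. (x $ p C) *\<^sub>R w C)"
      by (simp add: vec_eq_iff sum_component)
    also have "\<dots> \<in> span (w ` Cs)"
      by (intro span_sum span_mul span_base) auto
    finally show ?thesis .
  qed
  moreover have "independent (w ` Cs)"
  proof (rule independent_if_scalars_zero)
    show "finite (w ` Cs)" using fin by simp
    fix f v assume zero: "(\<Sum>u\<in>w ` Cs. f u *\<^sub>R u) = 0" and "v \<in> w ` Cs"
    then obtain C where C: "C \<in> Cs" "v = w C" by blast
    have "0 = (\<Sum>C'\<in>Cs. f (w C') *\<^sub>R w C') $ p C"
      using zero by (simp add: sum.reindex[OF inj])
    also have "\<dots> = (\<Sum>C'\<in>Cs. if C' = C then f (w C') else 0)"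
      using C by (simp add: sum_component w_at_pivot if_distrib[of "\<lambda>a. _ * a"] cong: if_cong)
    also have "\<dots> = f v" using C fin by simp
    finally show "f v = 0" by simp
  qed
  ultimately have "card (w ` Cs) = dim K"
    using w_in by (intro basis_card_eq_dim) auto
  then show ?thesis using card_image[OF inj] by simp
qed

lemma signed_laplacian_quadratic_form:
  fixes s :: "'i::finite \<Rightarrow> 'i \<Rightarrow> real"
  assumes sym: "\<And>i j. s i j = s j i" and "\<sigma> * \<sigma> = 1"
  shows "2 * (\<Sum>i\<in>UNIV. x i * (\<Sum>j\<in>UNIV. s i j * (x i - \<sigma> * x j)))
           = (\<Sum>i\<in>UNIV. \<Sum>j\<in>UNIV. s i j * (x i - \<sigma> * x j)\<^sup>2)"
proof -
  have square: "s i j * (x i - \<sigma> * x j)\<^sup>2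
      = s i j * (x i * (x i - \<sigma> * x j)) + s j i * (x j * (x j - \<sigma> * x i))" for i j
    using assms by (simp add: power2_eq_square algebra_simps)
  have "(\<Sum>i\<in>UNIV. \<Sum>j\<in>UNIV. s j i * (x j * (x j - \<sigma> * x i)))
      = (\<Sum>i\<in>UNIV. \<Sum>j\<in>UNIV. s i j * (x i * (x i - \<sigma> * x j)))"
    by (rule sum.swap)
  then show ?thesis
    by (simp add: square sum.distrib sum_distrib_left mult_ac)
qed

lemma signed_laplacian_kernel_edgewise:
  fixes s :: "'i::finite \<Rightarrow> 'i \<Rightarrow> real"
  assumes "\<And>i j. s i j = s j i" and nonneg: "\<And>i j. 0 \<le> s i j" and "\<sigma> * \<sigma> = 1"
    and kernel: "\<And>i. (\<Sum>j\<in>UNIV. s i j * (x i - \<sigma> * x j)) = 0"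
  shows "s i j * (x i - \<sigma> * x j)\<^sup>2 = 0"
proof -
  have "(\<Sum>i\<in>UNIV. \<Sum>j\<in>UNIV. s i j * (x i - \<sigma> * x j)\<^sup>2) = 0"
    using signed_laplacian_quadratic_form[of s \<sigma> x] assms by simp
  then have "\<forall>i\<in>UNIV. (\<Sum>j\<in>UNIV. s i j * (x i - \<sigma> * x j)\<^sup>2) = 0"
    by (subst (asm) sum_nonneg_eq_0_iff) (auto intro!: sum_nonneg simp: nonneg)
  then show ?thesis
    by (simp add: sum_nonneg_eq_0_iff nonneg)
qed

lemma symm_part_entry:
  "symm_part E $ i $ j = (if (i, j) \<in> undir_edges E then 1 else 0)"
  by (simp add: symm_part_def hadamard_def adj_def transpose_def undir_edges_def)

lemma deg_diag_entry:
  "deg_diag E $ i $ j = (if i = j then (\<Sum>k\<in>UNIV. symm_part E $ i $ k) else 0)"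
  by (simp add: deg_diag_def matrix_matrix_mult_def symm_part_def hadamard_def transpose_def)

text \<open>At \<open>t = \<sigma>/\<tau>\<close> with \<open>\<sigma>\<^sup>2 = 1\<close> the two occurrences of \<open>A\<close> cancel, leaving \<open>(D - \<sigma>S)/\<tau>\<close>.\<close>
lemma Mtau_at_sign_over_tau:
  assumes "\<tau> \<noteq> 0" and "\<sigma> * \<sigma> = 1"
  shows "Mtau E \<tau> (\<sigma> / \<tau>) = (1 / \<tau>) *\<^sub>R (deg_diag E - \<sigma> *\<^sub>R symm_part E)"
proof -
  have "\<sigma> * \<sigma> * \<sigma> = \<sigma>" using assms(2) by simp
  then show ?thesis
    using assms
    by (simp add: Mtau_def vec_eq_iff mat_def power2_eq_square power3_eq_cube field_simps)
qed

lemma signed_laplacian_apply: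
  "((deg_diag E - \<sigma> *\<^sub>R symm_part E) *v x) $ i
     = (\<Sum>j\<in>UNIV. symm_part E $ i $ j * (x $ i - \<sigma> * x $ j))"
proof -
  have "(\<Sum>j\<in>UNIV. deg_diag E $ i $ j * x $ j) = (\<Sum>j\<in>UNIV. symm_part E $ i $ j) * x $ i"
    by (simp add: deg_diag_entry if_distrib[of "\<lambda>a. a * _"] cong: if_cong)
  then show ?thesis
    by (simp add: matrix_vector_mult_def algebra_simps sum_subtractf sum_distrib_left
          sum_distrib_right)
qed

definition sign_harmonic :: "('n \<times> 'n) set \<Rightarrow> real \<Rightarrow> (real^'n) set" where
  "sign_harmonic E \<sigma> = {x. \<forall>i j. (i, j) \<in> undir_edges E \<longrightarrow> x $ i = \<sigma> * x $ j}"

lemma subspace_sign_harmonic: "subspace (sign_harmonic E \<sigma>)"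
  by (auto simp: subspace_def sign_harmonic_def distrib_left)

lemma null_space_Mtau_at_sign_over_tau:
  fixes E :: "('n::finite \<times> 'n) set"
  assumes "\<tau> \<noteq> 0" and \<sigma>: "\<bar>\<sigma>\<bar> = 1"
  shows "{x. Mtau E \<tau> (\<sigma> / \<tau>) *v x = 0} = sign_harmonic E \<sigma>"
proof -
  have \<sigma>2: "\<sigma> * \<sigma> = 1" using \<sigma> by (metis abs_mult_self_eq mult_1_right)
  have "Mtau E \<tau> (\<sigma> / \<tau>) *v x = 0 \<longleftrightarrow> (deg_diag E - \<sigma> *\<^sub>R symm_part E) *v x = 0" for x
    using assms by (simp add: Mtau_at_sign_over_tau \<sigma>2 scaleR_matrix_vector_assoc[symmetric])
  moreover have "(deg_diag E - \<sigma> *\<^sub>R symm_part E) *v x = 0 \<longleftrightarrow> x \<in> sign_harmonic E \<sigma>" for x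
  proof
    assume "(deg_diag E - \<sigma> *\<^sub>R symm_part E) *v x = 0"
    then have rows: "\<And>i. (\<Sum>j\<in>UNIV. symm_part E $ i $ j * (x $ i - \<sigma> * x $ j)) = 0"
      by (metis signed_laplacian_apply zero_index)
    have edgewise: "symm_part E $ i $ j * (x $ i - \<sigma> * x $ j)\<^sup>2 = 0" for i j
      by (rule signed_laplacian_kernel_edgewise[where s = "\<lambda>i j. symm_part E $ i $ j"
            and x = "\<lambda>i. x $ i", OF _ _ _ rows])
         (auto simp: symm_part_entry undir_edges_def \<sigma>2)
    show "x \<in> sign_harmonic E \<sigma>"
      unfolding sign_harmonic_def
    proof (intro CollectI allI impI)
      fix i j assume "(i, j) \<in> undir_edges E"
      with edgewise[of i j] show "x $ i = \<sigma> * x $ j" by (simp add: symm_part_entry)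
    qed
  next
    assume "x \<in> sign_harmonic E \<sigma>"
    then show "(deg_diag E - \<sigma> *\<^sub>R symm_part E) *v x = 0"
      by (auto simp: vec_eq_iff signed_laplacian_apply symm_part_entry sign_harmonic_def
            intro!: sum.neutral)
  qed
  ultimately show ?thesis by blast
qed

lemma equiv_undir_reachable: "equiv UNIV ((undir_edges E)\<^sup>*)"
proof -
  have "sym (undir_edges E)" by (auto simp: sym_def undir_edges_def)
  then show ?thesis by (simp add: equiv_def refl_rtrancl trans_rtrancl sym_rtrancl)
qed

lemma component_closed:
  "C \<in> components E \<Longrightarrow> i \<in> C \<Longrightarrow> (i, j) \<in> (undir_edges E)\<^sup>* \<Longrightarrow> j \<in> C"
  unfolding components_def by (rule in_quotient_imp_closed[OF equiv_undir_reachable])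

lemma component_connected:
  "C \<in> components E \<Longrightarrow> i \<in> C \<Longrightarrow> j \<in> C \<Longrightarrow> (i, j) \<in> (undir_edges E)\<^sup>*"
  unfolding components_def by (rule in_quotient_imp_in_rel[OF equiv_undir_reachable]) auto

lemma components_disjoint:
  "C \<in> components E \<Longrightarrow> C' \<in> components E \<Longrightarrow> i \<in> C \<Longrightarrow> i \<in> C' \<Longrightarrow> C = C'"
  unfolding components_def using quotient_disj[OF equiv_undir_reachable] by blast

lemma component_of_vertex:
  "(undir_edges E)\<^sup>* `` {i} \<in> components E" "i \<in> (undir_edges E)\<^sup>* `` {i}"
  by (auto simp: components_def intro: quotientI)

lemma undir_edge_within_component:
  assumes "C \<in> components E" and "(i, j) \<in> undir_edges E"
  shows "i \<in> C \<longleftrightarrow> j \<in> C"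
proof -
  have "(j, i) \<in> undir_edges E" using assms(2) by (simp add: undir_edges_def)
  then show ?thesis using assms by (blast intro: component_closed)
qed

lemma component_nonempty: "C \<in> components E \<Longrightarrow> C \<noteq> {}"
  unfolding components_def by (rule in_quotient_imp_non_empty[OF equiv_undir_reachable])

lemma sign_harmonic_abs_eq:
  assumes "\<bar>\<sigma>\<bar> = 1" and x: "x \<in> sign_harmonic E \<sigma>" and "(a, b) \<in> (undir_edges E)\<^sup>*"
  shows "\<bar>x $ b\<bar> = \<bar>x $ a\<bar>"
  using assms(3)
proof induction
  case (step b c)
  then have "x $ b = \<sigma> * x $ c" using x by (simp add: sign_harmonic_def)
  then show ?case using step.IH \<open>\<bar>\<sigma>\<bar> = 1\<close> by (simp add: abs_mult)
qed simp

lemma sign_harmonic_proportional: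
  assumes "\<bar>\<sigma>\<bar> = 1" and "x \<in> sign_harmonic E \<sigma>" "w \<in> sign_harmonic E \<sigma>"
    and "w $ a = 1" and "(a, b) \<in> (undir_edges E)\<^sup>*"
  shows "x $ b = x $ a * w $ b"
proof -
  have "x - (x $ a) *\<^sub>R w \<in> sign_harmonic E \<sigma>"
    using assms(2,3) subspace_sign_harmonic by (intro subspace_diff subspace_mul) auto
  from sign_harmonic_abs_eq[OF assms(1) this assms(5)] show ?thesis
    using assms(4) by simp
qed

lemma sign_harmonic_restrict_component:
  assumes C: "C \<in> components E"
    and x: "\<And>i j. i \<in> C \<Longrightarrow> (i, j) \<in> undir_edges E \<Longrightarrow> x $ i = \<sigma> * x $ j"
  shows "(\<chi> i. if i \<in> C then x $ i else 0) \<in> sign_harmonic E \<sigma>"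
  using undir_edge_within_component[OF C] x by (auto simp: sign_harmonic_def)

definition supporting_components :: "('n::finite \<times> 'n) set \<Rightarrow> real \<Rightarrow> 'n set set" where
  "supporting_components E \<sigma>
     = {C \<in> components E. \<exists>x \<in> sign_harmonic E \<sigma>. \<exists>i \<in> C. x $ i \<noteq> 0}"

lemma dim_sign_harmonic:
  fixes E :: "('n::finite \<times> 'n) set"
  assumes \<sigma>: "\<bar>\<sigma>\<bar> = 1"
  shows "dim (sign_harmonic E \<sigma>) = card (supporting_components E \<sigma>)"
proof -
  let ?K = "sign_harmonic E \<sigma>" and ?Cs = "supporting_components E \<sigma>"
  have "\<forall>C \<in> ?Cs. \<exists>x. x \<in> ?K \<and> (\<exists>i \<in> C. x $ i \<noteq> 0)"
    by (auto simp: supporting_components_def)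
  then obtain X where X: "\<forall>C \<in> ?Cs. X C \<in> ?K \<and> (\<exists>i \<in> C. X C $ i \<noteq> 0)"
    by (rule bchoice[elim_format]) blast
  define p where "p C = (SOME i. i \<in> C \<and> X C $ i \<noteq> 0)" for C
  have p: "p C \<in> C \<and> X C $ p C \<noteq> 0" if "C \<in> ?Cs" for C
  proof -
    have "\<exists>i. i \<in> C \<and> X C $ i \<noteq> 0" using X that by blast
    then show ?thesis unfolding p_def by (rule someI_ex)
  qed
  define w where "w C = (1 / X C $ p C) *\<^sub>R (\<chi> i. if i \<in> C then X C $ i else 0)" for C
  show ?thesis
  proof (rule dim_eq_card_block_basis[where p = p and w = w])
    fix C assume C: "C \<in> ?Cs"
    then have "C \<in> components E" by (simp add: supporting_components_def)
    then have "(\<chi> i. if i \<in> C then X C $ i else 0) \<in> ?K"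
      using X C by (intro sign_harmonic_restrict_component) (auto simp: sign_harmonic_def)
    then show "w C \<in> ?K"
      unfolding w_def by (intro subspace_mul subspace_sign_harmonic)
    show "p C \<in> C" "w C $ p C = 1" using p[OF C] by (simp_all add: w_def)
    show "x $ i = x $ p C * w C $ i" if "x \<in> ?K" "i \<in> C" for x i
    proof -
      have "(p C, i) \<in> (undir_edges E)\<^sup>*"
        using \<open>C \<in> components E\<close> p[OF C] \<open>i \<in> C\<close> by (blast intro: component_connected)
      with \<open>x \<in> ?K\<close> \<open>w C \<in> ?K\<close> \<open>w C $ p C = 1\<close> show ?thesis
        by (rule sign_harmonic_proportional[OF \<sigma>])
    qed
  next
    fix x i assume "x \<in> ?K" "i \<notin> \<Union>?Cs"
    then show "x $ i = 0"
      using component_of_vertex[where E = E and i = i] by (auto simp: supporting_components_def)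
  next
    fix C C' i assume "C \<in> ?Cs" "C' \<in> ?Cs" "i \<in> C" "i \<in> C'"
    then have "C \<in> components E" "C' \<in> components E"
      by (simp_all add: supporting_components_def)
    then show "C = C'" using \<open>i \<in> C\<close> \<open>i \<in> C'\<close> by (rule components_disjoint)
  qed (simp add: w_def)
qed

lemma supporting_components_one: "supporting_components E 1 = components E"
proof -
  have "(\<chi> i. 1) \<in> sign_harmonic E 1" by (simp add: sign_harmonic_def)
  then show ?thesis
    using component_nonempty by (fastforce simp: supporting_components_def)
qed

lemma supporting_components_minus_one:
  fixes E :: "('n::finite \<times> 'n) set"
  shows "supporting_components E (-1) = {C \<in> components E. bipartite_comp E C}"
proof (intro set_eqI iffI)
  fix C assume "C \<in> supporting_components E (-1)"
  then have C: "C \<in> components E"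
    and "\<exists>x \<in> sign_harmonic E (-1). \<exists>i \<in> C. x $ i \<noteq> 0"
    by (simp_all add: supporting_components_def)
  then obtain x i where x: "x \<in> sign_harmonic E (-1)" and "i \<in> C" "x $ i \<noteq> 0"
    by blast
  have "(0 < x $ j) \<noteq> (0 < x $ k)"
    if "j \<in> C" "k \<in> C" "(j, k) \<in> undir_edges E" for j k
  proof -
    have "(i, j) \<in> (undir_edges E)\<^sup>*" using C \<open>i \<in> C\<close> \<open>j \<in> C\<close> by (rule component_connected)
    from sign_harmonic_abs_eq[OF _ x this] have "\<bar>x $ j\<bar> = \<bar>x $ i\<bar>" by simp
    moreover have "x $ j = - x $ k" using x that(3) by (simp add: sign_harmonic_def)
    ultimately show ?thesis using \<open>x $ i \<noteq> 0\<close> by auto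
  qed
  then have "bipartite_comp E C"
    unfolding bipartite_comp_def by (intro exI[where x = "\<lambda>j. 0 < x $ j"]) blast
  with C show "C \<in> {C \<in> components E. bipartite_comp E C}" by blast
next
  fix C assume "C \<in> {C \<in> components E. bipartite_comp E C}"
  then have C: "C \<in> components E" and "bipartite_comp E C" by simp_all
  from \<open>bipartite_comp E C\<close> obtain f :: "'n \<Rightarrow> bool"
    where f: "\<forall>i j. i \<in> C \<and> j \<in> C \<and> (i, j) \<in> undir_edges E \<longrightarrow> f i \<noteq> f j"
    unfolding bipartite_comp_def ..
  define g :: "real^'n" where "g = (\<chi> i. if f i then 1 else - 1)"
  define x :: "real^'n" where "x = (\<chi> i. if i \<in> C then g $ i else 0)"
  have "x \<in> sign_harmonic E (-1)"
    unfolding x_def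
  proof (rule sign_harmonic_restrict_component[OF C])
    fix i j assume "i \<in> C" "(i, j) \<in> undir_edges E"
    moreover have "j \<in> C" using undir_edge_within_component[OF C] calculation by blast
    ultimately have "f i \<noteq> f j" using f by blast
    then show "g $ i = -1 * g $ j" unfolding g_def by (cases "f i") simp_all
  qed
  moreover obtain i where "i \<in> C" using component_nonempty[OF C] by blast
  moreover have "x $ i \<noteq> 0" using \<open>i \<in> C\<close> by (simp add: x_def g_def)
  ultimately show "C \<in> supporting_components E (-1)"
    using C unfolding supporting_components_def by blast
qed

lemma sign_harmonic_nontrivial_iff:
  "(\<exists>x \<in> sign_harmonic E \<sigma>. x \<noteq> 0) \<longleftrightarrow> supporting_components E \<sigma> \<noteq> {}"
proof
  assume "\<exists>x \<in> sign_harmonic E \<sigma>. x \<noteq> 0"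
  then obtain x i where "x \<in> sign_harmonic E \<sigma>" "x $ i \<noteq> 0"
    by (metis vec_eq_iff zero_index)
  then have "(undir_edges E)\<^sup>* `` {i} \<in> supporting_components E \<sigma>"
    using component_of_vertex[where E = E and i = i] by (auto simp: supporting_components_def)
  then show "supporting_components E \<sigma> \<noteq> {}" by blast
next
  assume "supporting_components E \<sigma> \<noteq> {}"
  then obtain x i where "x \<in> sign_harmonic E \<sigma>" "x $ i \<noteq> 0"
    by (auto simp: supporting_components_def)
  then show "\<exists>x \<in> sign_harmonic E \<sigma>. x \<noteq> 0" by (metis zero_index)
qed

lemma is_eigenvalue_Mtau_iff:
  assumes "\<tau> \<noteq> 0" and "\<bar>\<sigma>\<bar> = 1"
  shows "is_eigenvalue (Mtau E \<tau>) (\<sigma> / \<tau>) \<longleftrightarrow> supporting_components E \<sigma> \<noteq> {}"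
  using null_space_Mtau_at_sign_over_tau[OF assms, of E]
  by (auto simp: is_eigenvalue_def sign_harmonic_nontrivial_iff[symmetric])

lemma geom_mult_Mtau:
  assumes "\<tau> \<noteq> 0" and "\<bar>\<sigma>\<bar> = 1"
  shows "geom_mult (Mtau E \<tau>) (\<sigma> / \<tau>) = card (supporting_components E \<sigma>)"
  by (simp add: geom_mult_def null_space_Mtau_at_sign_over_tau[OF assms] dim_sign_harmonic assms(2))

theorem proposition4p1:
  fixes E :: "('n::finite \<times> 'n) set" and \<tau> :: real
  assumes noloops: "\<forall>v. (v, v) \<notin> E"
    and tau_pos: "0 < \<tau>" and tau_le: "\<tau> \<le> 1"
  shows "is_eigenvalue (Mtau E \<tau>) (1 / \<tau>)
       \<and> geom_mult (Mtau E \<tau>) (1 / \<tau>) = card (components E)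
       \<and> (is_eigenvalue (Mtau E \<tau>) (- 1 / \<tau>)
            \<longleftrightarrow> (\<exists>C \<in> components E. bipartite_comp E C))
       \<and> (is_eigenvalue (Mtau E \<tau>) (- 1 / \<tau>)
            \<longrightarrow> geom_mult (Mtau E \<tau>) (- 1 / \<tau>)
                = card {C \<in> components E. bipartite_comp E C})"
proof -
  have "\<tau> \<noteq> 0" using tau_pos by simp
  have sign: "\<bar>1 :: real\<bar> = 1" "\<bar>-1 :: real\<bar> = 1" by simp_all
  note eigenvalue = is_eigenvalue_Mtau_iff[OF \<open>\<tau> \<noteq> 0\<close>, where E = E]
    and multiplicity = geom_mult_Mtau[OF \<open>\<tau> \<noteq> 0\<close>, where E = E]
  have "components E \<noteq> {}" by (simp add: components_def)
  then show ?thesis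
    using eigenvalue[OF sign(1)] eigenvalue[OF sign(2)]
      multiplicity[OF sign(1)] multiplicity[OF sign(2)]
    by (simp add: supporting_components_one supporting_components_minus_one Bex_def)
qed

end
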